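(* Let $n,k$ be integers with $2\le k<n$. Then $$\overline{\mathrm{dist}}_F(\mathcal{S}^{n,k},\mathcal{S}^n_+)\ge \frac{n-k}{\sqrt{(k-1)^2 n+n(n-1)}}.$$
   Context: $\mathcal{S}^n_+$ denotes the cone of $n\times n$ real symmetric positive semidefinite (PSD) matrices. For integers $2\le k\le n$, the $k$-PSD closure $\mathcal{S}^{n,k}$ is the set of all $n\times n$ real symmetric matrices all of whose $k\times k$ principal submatrices are PSD. For a matrix $M$, $\mathrm{dist}_F(M,\mathcal{S}^n_+)=\inf_{N\in\mathcal{S}^n_+}\|M-N\|_F$, where $\|\cdot\|_F$ is the Frobenius norm. For a set $\mathcal{K}$ of $n\times n$ matrices, $\overline{\mathrm{dist}}_F(\mathcal{K},\mathcal{S}^n_+)=\sup_{M\in\mathcal{K},\ \|M\|_F=1}\mathrm{dist}_F(M,\mathcal{S}^n_+)$. *)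

theory Defs
  imports "HOL-Analysis.Analysis"
begin

text \<open>Real n x n matrices are rendered as real^'n^'n, with n = CARD('n).\<close>

definition symmetric_mat :: "real^'n^'n \<Rightarrow> bool" where
  "symmetric_mat M \<longleftrightarrow> transpose M = M"

definition psd_cone :: "(real^'n^'n) set" where
  "psd_cone = {M. symmetric_mat M \<and> (\<forall>x::real^'n. 0 \<le> x \<bullet> (M *v x))}"

text \<open>The principal submatrix of M indexed by I (viewed as a matrix indexed by I x I)
  is PSD: its quadratic form is nonnegative on all vectors indexed by I
  (symmetry is inherited from M).\<close>
definition principal_submatrix_psd :: "real^'n^'n \<Rightarrow> 'n set \<Rightarrow> bool" where
  "principal_submatrix_psd M I \<longleftrightarrow>
     (\<forall>y::'n \<Rightarrow> real. 0 \<le> (\<Sum>i\<in>I. \<Sum>j\<in>I. y i * (M $ i $ j) * y j))"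

definition kpsd_closure :: "nat \<Rightarrow> (real^'n^'n) set" where
  "kpsd_closure k = {M. symmetric_mat M \<and>
     (\<forall>I::'n set. card I = k \<longrightarrow> principal_submatrix_psd M I)}"

definition frob_norm :: "real^'n^'n \<Rightarrow> real" where
  "frob_norm M = sqrt (\<Sum>i\<in>UNIV. \<Sum>j\<in>UNIV. (M $ i $ j)\<^sup>2)"

definition distF :: "real^'n^'n \<Rightarrow> (real^'n^'n) set \<Rightarrow> real" where
  "distF M S = (INF N\<in>S. frob_norm (M - N))"

definition distF_bar :: "(real^'n^'n) set \<Rightarrow> (real^'n^'n) set \<Rightarrow> real" where
  "distF_bar K S = (SUP M\<in>{M\<in>K. frob_norm M = 1}. distF M S)"

end

theory Submission
  imports Defs
begin

text \<open>The witness is the normalisation of \<open>k I - J\<close>, with \<open>J\<close> the all-ones matrix.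
  For a principal submatrix indexed by \<open>I\<close> with \<open>|I| = k\<close> its quadratic form is
  \<open>k \<Sum> y\<^sub>i\<^sup>2 - (\<Sum> y\<^sub>i)\<^sup>2 \<ge> 0\<close> by Cauchy-Schwarz, so it lies in the \<open>k\<close>-PSD closure.
  On the other hand \<open>\<langle>J, N\<rangle> \<ge> 0\<close> for every PSD matrix \<open>N\<close> and \<open>\<parallel>J\<parallel>\<^sub>F = n\<close>, so the
  distance of any \<open>M\<close> to the PSD cone is at least \<open>-\<langle>J, M\<rangle> / n\<close>, which for the
  witness is the claimed bound.\<close>

lemma frob_norm_nonneg: "0 \<le> frob_norm A"
  unfolding frob_norm_def by (simp add: sum_nonneg)

lemma frob_norm_minus_commute: "frob_norm (A - B) = frob_norm (B - A)"
  unfolding frob_norm_def by (simp add: power2_commute)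

lemma abs_sum_entries_le_frob_norm:
  fixes A :: "real^'n^'n"
  shows "\<bar>\<Sum>i\<in>UNIV. \<Sum>j\<in>UNIV. A $ i $ j\<bar> \<le> real CARD('n) * frob_norm A"
proof -
  let ?s = "\<Sum>i\<in>UNIV. \<Sum>j\<in>UNIV. A $ i $ j"
  let ?q = "\<Sum>i\<in>UNIV. \<Sum>j\<in>UNIV. (A $ i $ j)\<^sup>2"
  have "?s\<^sup>2 = (\<Sum>p\<in>UNIV \<times> UNIV. A $ fst p $ snd p)\<^sup>2"
    by (simp add: sum.cartesian_product split_def)
  also have "\<dots> \<le> (\<Sum>p\<in>UNIV \<times> UNIV. (A $ fst p $ snd p)\<^sup>2) * card ((UNIV::'n set) \<times> (UNIV::'n set))"
    by (rule sum_squared_le_sum_of_squares)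
  also have "\<dots> = ?q * (real CARD('n))\<^sup>2"
    by (simp add: sum.cartesian_product split_def card_cartesian_product power2_eq_square)
  finally have "sqrt (?s\<^sup>2) \<le> sqrt (?q * (real CARD('n))\<^sup>2)"
    by (rule real_sqrt_le_mono)
  thus ?thesis
    unfolding frob_norm_def by (simp add: real_sqrt_mult mult.commute)
qed

lemma zero_in_psd_cone: "0 \<in> psd_cone"
  unfolding psd_cone_def symmetric_mat_def by (simp add: vec_eq_iff transpose_def)

lemma psd_cone_sum_entries_nonneg:
  fixes N :: "real^'n^'n"
  assumes "N \<in> psd_cone"
  shows "0 \<le> (\<Sum>i\<in>UNIV. \<Sum>j\<in>UNIV. N $ i $ j)"
proof -
  have "0 \<le> ((\<chi> i. 1)::real^'n) \<bullet> (N *v (\<chi> i. 1))"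
    using assms unfolding psd_cone_def by blast
  thus ?thesis
    by (simp add: inner_vec_def matrix_vector_mult_def)
qed

lemma distF_psd_cone_ge_neg_sum_entries:
  fixes M :: "real^'n^'n"
  shows "- (\<Sum>i\<in>UNIV. \<Sum>j\<in>UNIV. M $ i $ j) / real CARD('n) \<le> distF M psd_cone"
  unfolding distF_def
proof (rule cINF_greatest)
  show "psd_cone \<noteq> {}"
    using zero_in_psd_cone by blast
next
  fix N :: "real^'n^'n"
  assume "N \<in> psd_cone"
  have "- (\<Sum>i\<in>UNIV. \<Sum>j\<in>UNIV. M $ i $ j)
        \<le> (\<Sum>i\<in>UNIV. \<Sum>j\<in>UNIV. N $ i $ j) - (\<Sum>i\<in>UNIV. \<Sum>j\<in>UNIV. M $ i $ j)"
    using psd_cone_sum_entries_nonneg[OF \<open>N \<in> psd_cone\<close>] by linarith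
  also have "\<dots> = (\<Sum>i\<in>UNIV. \<Sum>j\<in>UNIV. (N - M) $ i $ j)"
    by (simp add: sum_subtractf)
  also have "\<dots> \<le> real CARD('n) * frob_norm (M - N)"
    using abs_sum_entries_le_frob_norm[of "N - M"] by (simp add: frob_norm_minus_commute)
  finally show "- (\<Sum>i\<in>UNIV. \<Sum>j\<in>UNIV. M $ i $ j) / real CARD('n) \<le> frob_norm (M - N)"
    by (simp add: field_simps)
qed

lemma distF_le_distF_bar:
  assumes "M \<in> K" and "frob_norm M = 1" and "0 \<in> S"
  shows "distF M S \<le> distF_bar K S"
proof -
  have dist_le_norm: "distF A S \<le> frob_norm A" for A
    unfolding distF_def
    by (rule cINF_lower2[OF _ \<open>0 \<in> S\<close>]) (auto intro: bdd_belowI2 frob_norm_nonneg)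
  have "bdd_above ((\<lambda>A. distF A S) ` {A \<in> K. frob_norm A = 1})"
    using dist_le_norm by (intro bdd_aboveI2[where M = 1]) (metis (mono_tags, lifting) mem_Collect_eq)
  then show ?thesis
    unfolding distF_bar_def by (rule cSUP_upper2) (use assms in auto)
qed

definition diag_offdiag_mat :: "real \<Rightarrow> real \<Rightarrow> real^'n^'n" where
  "diag_offdiag_mat a b = (\<chi> i j. if i = j then a else b)"

lemma sum_if_eq_else:
  fixes a b :: real
  shows "(\<Sum>j\<in>(UNIV::'n::finite set). if i = j then a else b) = a + (real CARD('n) - 1) * b"
proof -
  have "(\<Sum>j\<in>(UNIV::'n set). if i = j then a else b)
        = (\<Sum>j\<in>(UNIV::'n set). b + (if i = j then a - b else 0))"
    by (rule sum.cong) auto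
  also have "\<dots> = real CARD('n) * b + (a - b)"
    by (simp add: sum.distrib)
  finally show ?thesis
    by (simp add: algebra_simps)
qed

lemma sum_entries_diag_offdiag_mat:
  "(\<Sum>i\<in>UNIV. \<Sum>j\<in>UNIV. (diag_offdiag_mat a b :: real^'n^'n) $ i $ j)
     = real CARD('n) * (a + (real CARD('n) - 1) * b)"
  unfolding diag_offdiag_mat_def by (simp add: sum_if_eq_else)

lemma frob_norm_diag_offdiag_mat:
  "frob_norm (diag_offdiag_mat a b :: real^'n^'n)
     = sqrt (real CARD('n) * (a\<^sup>2 + (real CARD('n) - 1) * b\<^sup>2))"
  unfolding frob_norm_def diag_offdiag_mat_def
  by (simp add: if_distrib[of "\<lambda>x. x\<^sup>2"] sum_if_eq_else cong: if_cong)

lemma principal_submatrix_psd_diag_offdiag_mat: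
  fixes I :: "'n::finite set"
  assumes "b \<le> 0" and "0 \<le> a + (real (card I) - 1) * b"
  shows "principal_submatrix_psd (diag_offdiag_mat a b :: real^'n^'n) I"
  unfolding principal_submatrix_psd_def
proof
  fix y :: "'n \<Rightarrow> real"
  have diag: "(\<Sum>i\<in>I. \<Sum>j\<in>I. (a - b) * (if i = j then y i * y j else 0))
               = (a - b) * (\<Sum>i\<in>I. (y i)\<^sup>2)"
    by (simp add: power2_eq_square flip: sum_distrib_left)
  have all: "(\<Sum>i\<in>I. \<Sum>j\<in>I. b * (y i * y j)) = b * (\<Sum>i\<in>I. y i)\<^sup>2"
    by (simp add: power2_eq_square flip: sum_distrib_left sum_distrib_right)
  have "(\<Sum>i\<in>I. \<Sum>j\<in>I. y i * (diag_offdiag_mat a b $ i $ j) * y j)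
        = (\<Sum>i\<in>I. \<Sum>j\<in>I. (a - b) * (if i = j then y i * y j else 0) + b * (y i * y j))"
    unfolding diag_offdiag_mat_def by (intro sum.cong refl) (auto simp: algebra_simps)
  also have "\<dots> = (a - b) * (\<Sum>i\<in>I. (y i)\<^sup>2) + b * (\<Sum>i\<in>I. y i)\<^sup>2"
    by (simp only: sum.distrib diag all)
  also have "\<dots> \<ge> (a - b) * (\<Sum>i\<in>I. (y i)\<^sup>2) + b * ((\<Sum>i\<in>I. (y i)\<^sup>2) * card I)"
    using sum_squared_le_sum_of_squares[of y I] \<open>b \<le> 0\<close> by (intro add_left_mono mult_left_mono_neg)
  also have "(a - b) * (\<Sum>i\<in>I. (y i)\<^sup>2) + b * ((\<Sum>i\<in>I. (y i)\<^sup>2) * card I)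
             = (a + (real (card I) - 1) * b) * (\<Sum>i\<in>I. (y i)\<^sup>2)"
    by (simp add: algebra_simps)
  finally show "0 \<le> (\<Sum>i\<in>I. \<Sum>j\<in>I. y i * (diag_offdiag_mat a b $ i $ j) * y j)"
    using assms(2) by (smt (verit) mult_nonneg_nonneg sum_nonneg zero_le_power2)
qed

lemma diag_offdiag_mat_in_kpsd_closure:
  assumes "b \<le> 0" and "0 \<le> a + (real k - 1) * b"
  shows "diag_offdiag_mat a b \<in> kpsd_closure k"
  unfolding kpsd_closure_def
proof (intro CollectI conjI allI impI)
  show "symmetric_mat (diag_offdiag_mat a b)"
    unfolding symmetric_mat_def diag_offdiag_mat_def by (simp add: vec_eq_iff transpose_def)
  show "principal_submatrix_psd (diag_offdiag_mat a b) I" if "card I = k" for I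
    using assms that by (intro principal_submatrix_psd_diag_offdiag_mat) auto
qed

theorem theorem3:
  fixes k :: nat
  assumes "2 \<le> k" and "k < CARD('n::finite)"
  shows "distF_bar (kpsd_closure k :: (real^'n^'n) set) psd_cone
           \<ge> (real CARD('n) - real k) /
              sqrt ((real k - 1)\<^sup>2 * real CARD('n) + real CARD('n) * (real CARD('n) - 1))"
proof -
  define n where "n = real CARD('n)"
  define c where "c = sqrt ((real k - 1)\<^sup>2 * n + n * (n - 1))"
  define M :: "real^'n^'n" where "M = diag_offdiag_mat ((real k - 1) / c) (- 1 / c)"
  have "n \<ge> 1" and "c > 0"
    using assms unfolding n_def c_def by (auto intro!: add_nonneg_pos)
  have "M \<in> kpsd_closure k"
    unfolding M_def using \<open>c > 0\<close> by (intro diag_offdiag_mat_in_kpsd_closure) (auto simp: field_simps)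
  moreover have "frob_norm M = 1"
  proof -
    have "0 \<le> (real k - 1)\<^sup>2 * n + n * (n - 1)"
      using \<open>n \<ge> 1\<close> by simp
    then have c_sq: "c\<^sup>2 = n * ((real k - 1)\<^sup>2 + (n - 1))"
      unfolding c_def by (subst real_sqrt_pow2) (simp_all add: algebra_simps)
    have "frob_norm M = sqrt (n * ((real k - 1)\<^sup>2 + (n - 1)) / c\<^sup>2)"
      using \<open>c > 0\<close>
      by (simp add: M_def frob_norm_diag_offdiag_mat power_divide flip: n_def add_divide_distrib)
    then show ?thesis
      using \<open>c > 0\<close> by (simp flip: c_sq)
  qed
  moreover have "(n - real k) / c \<le> distF M psd_cone"
  proof -
    have "- (\<Sum>i\<in>UNIV. \<Sum>j\<in>UNIV. M $ i $ j) / n = (n - real k) / c"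
      using \<open>n \<ge> 1\<close> \<open>c > 0\<close>
      by (simp add: M_def sum_entries_diag_offdiag_mat field_simps flip: n_def)
    then show ?thesis
      using distF_psd_cone_ge_neg_sum_entries[of M] by (simp add: n_def)
  qed
  ultimately show ?thesis
    using distF_le_distF_bar[OF _ _ zero_in_psd_cone] unfolding n_def c_def by fastforce
qed

end
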